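(* Let $A$ be a Hausdorff locally quasi-convex abelian topological group. If $A$ is complete (with respect to its group uniformity), or if $\alpha_A$ is surjective, then $A$ has the quasi-convex compactness property.
   Context: $\mathbb{T}=\mathbb{R}/\mathbb{Z}$, $\Lambda_1$ is the image of $[-\tfrac14,\tfrac14]$ in $\mathbb{T}$. $\hat A$ is the group of continuous homomorphisms $A\to\mathbb{T}$ with the compact-open topology and $\alpha_A\colon A\to\hat{\hat A}$, $\alpha_A(a)(\chi)=\chi(a)$. For $S\subseteq A$, $S^\vartriangleright=\{\chi\in\hat A\mid\chi(S)\subseteq\Lambda_1\}$; for $\Phi\subseteq\hat A$, $\Phi^\vartriangleleft=\{a\in A\mid\chi(a)\in\Lambda_1\ \forall\chi\in\Phi\}$. $A$ is locally quasi-convex if $\{U^{\vartriangleright\vartriangleleft}\mid U \text{ a neighborhood of } 0\}$ is a base at $0$. $A$ has the quasi-convex compactness property if $K^{\vartriangleright\vartriangleleft}$ is compact for every compact $K\subseteq A$. *)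

theory Defs
  imports "HOL-Analysis.Analysis"
begin

text \<open>The circle group T = R/Z is realised as the unit circle in the complex plane,
  via the isomorphism t \<mapsto> cis (2 pi t).\<close>

definition circle :: "complex set" where
  "circle = (\<lambda>t. cis (2 * pi * t)) ` UNIV"

definition Lambda1 :: "complex set" where
  "Lambda1 = (\<lambda>t. cis (2 * pi * t)) ` {-1/4..1/4}"

definition dual :: "('a::topological_ab_group_add \<Rightarrow> complex) set" where
  "dual = {ch. continuous_on UNIV ch \<and> (\<forall>x. ch x \<in> circle) \<and>
              (\<forall>x y. ch (x + y) = ch x * ch y)}"

definition compact_open_dual :: "('a::topological_ab_group_add \<Rightarrow> complex) topology" where
  "compact_open_dual = topology_generated_by
     {{ch \<in> dual. ch ` K \<subseteq> U} | K U. compact K \<and> open U}"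

definition bidual :: "(('a::topological_ab_group_add \<Rightarrow> complex) \<Rightarrow> complex) set" where
  "bidual = {\<psi>. continuous_map (subtopology compact_open_dual dual) (top_of_set circle) \<psi> \<and>
               (\<forall>ch1\<in>dual. \<forall>ch2\<in>dual. \<psi> (\<lambda>x. ch1 x * ch2 x) = \<psi> ch1 * \<psi> ch2)}"

text \<open>alpha_A(a)(chi) = chi(a); alpha_A is surjective onto the bidual.\<close>
definition alpha_surjective :: "'a::topological_ab_group_add itself \<Rightarrow> bool" where
  "alpha_surjective _ \<longleftrightarrow>
     (\<forall>\<psi>\<in>(bidual :: (('a \<Rightarrow> complex) \<Rightarrow> complex) set).
        \<exists>a::'a. \<forall>ch\<in>dual. \<psi> ch = ch a)"

definition polar :: "'a::topological_ab_group_add set \<Rightarrow> ('a \<Rightarrow> complex) set" where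
  "polar S = {ch \<in> dual. ch ` S \<subseteq> Lambda1}"

definition prepolar :: "('a::topological_ab_group_add \<Rightarrow> complex) set \<Rightarrow> 'a set" where
  "prepolar \<Phi> = {a. \<forall>ch\<in>\<Phi>. ch a \<in> Lambda1}"

definition nhd0 :: "'a::topological_ab_group_add set \<Rightarrow> bool" where
  "nhd0 U \<longleftrightarrow> (\<exists>V. open V \<and> 0 \<in> V \<and> V \<subseteq> U)"

definition locally_quasi_convex :: "'a::topological_ab_group_add itself \<Rightarrow> bool" where
  "locally_quasi_convex _ \<longleftrightarrow>
     (\<forall>U::'a set. nhd0 U \<longrightarrow> nhd0 (prepolar (polar U))) \<and>
     (\<forall>W::'a set. nhd0 W \<longrightarrow> (\<exists>U. nhd0 U \<and> prepolar (polar U) \<subseteq> W))"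

definition qc_compactness :: "'a::topological_ab_group_add itself \<Rightarrow> bool" where
  "qc_compactness _ \<longleftrightarrow> (\<forall>K::'a set. compact K \<longrightarrow> compact (prepolar (polar K)))"

text \<open>Cauchy filters and completeness with respect to the group uniformity
  (left and right uniformities coincide since the group is abelian).\<close>
definition group_cauchy :: "'a::topological_ab_group_add filter \<Rightarrow> bool" where
  "group_cauchy F \<longleftrightarrow> (\<forall>U. nhd0 U \<longrightarrow> (\<exists>X. eventually (\<lambda>x. x \<in> X) F \<and>
                                          (\<forall>x\<in>X. \<forall>y\<in>X. x - y \<in> U)))"

definition group_complete :: "'a::topological_ab_group_add itself \<Rightarrow> bool" where
  "group_complete _ \<longleftrightarrow>
     (\<forall>F::'a filter. F \<noteq> bot \<and> group_cauchy F \<longrightarrow> (\<exists>x. F \<le> nhds x))"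

end

theory Submission
  imports Defs
begin

text \<open>Let \<open>Q\<close> be the quasi-convex hull \<open>K\<^sup>\<rhd>\<^sup>\<lhd>\<close> of a compact set \<open>K\<close>. If a character \<open>\<chi>\<close> satisfies
  \<open>\<chi>(jk) \<in> \<Lambda>\<^sub>1\<close> for all \<open>k \<in> K\<close> and \<open>j \<le> n\<close>, then \<open>\<chi>\<^sup>j \<in> K\<^sup>\<rhd>\<close>, so \<open>\<chi>(x)\<^sup>j \<in> \<Lambda>\<^sub>1\<close> for \<open>x \<in> Q\<close> and
  \<open>j \<le> n\<close>, which forces \<open>|\<chi>(x) - 1| \<le> \<pi>/n\<close>. Applied to quotients of characters: characters that
  are close on the compact set \<open>{jk | j \<le> n, k \<in> K}\<close> are uniformly close on \<open>Q\<close>.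

  Polars \<open>V\<^sup>\<rhd>\<close> of neighbourhoods of \<open>0\<close> are equicontinuous, hence totally bounded for uniform
  convergence on compact sets; by local quasi-convexity the sets \<open>V\<^sup>\<rhd>\<^sup>\<lhd>\<close> form a base at \<open>0\<close>.
  Together, closeness in finitely many characters forces closeness in the group on \<open>Q\<close>, i.e.
  \<open>Q\<close> is precompact.

  Now let \<open>M\<close> be an ultrafilter on the closed set \<open>Q\<close>; every character converges along \<open>M\<close>, say to
  \<open>\<psi>(\<chi>)\<close>. If the group is complete, \<open>M\<close> is Cauchy and converges. If \<open>\<alpha>\<close> is surjective: by the
  estimate above \<open>\<psi>\<close> is continuous for the compact-open topology, so \<open>\<psi> = \<alpha>(a)\<close>, and
  precompactness of \<open>Q\<close> turns the convergence of all \<open>\<chi>\<close> along \<open>M\<close> to \<open>\<chi>(a)\<close> into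
  convergence of \<open>M\<close> to \<open>a\<close>.\<close>

section \<open>The circle and \<open>\<Lambda>\<^sub>1\<close>\<close>

lemma cis_Arg_unit:
  assumes "cmod z = 1"
  shows "cis (Arg z) = z"
proof -
  have "z \<noteq> 0" using assms by auto
  then show ?thesis using assms by (simp add: cis_Arg sgn_eq)
qed

lemma circle_eq_sphere: "circle = sphere 0 1"
proof
  show "circle \<subseteq> sphere 0 1" unfolding circle_def by auto
  show "sphere 0 1 \<subseteq> circle"
  proof
    fix z :: complex assume "z \<in> sphere 0 1"
    then have "z = cis (2 * pi * (Arg z / (2 * pi)))" by (simp add: cis_Arg_unit)
    then show "z \<in> circle" unfolding circle_def by blast
  qed
qed

lemma abs_le_pi_half_if_cos_nonneg:
  fixes x :: real
  assumes "\<bar>x\<bar> \<le> pi" "cos x \<ge> 0"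
  shows "\<bar>x\<bar> \<le> pi / 2"
proof (rule ccontr)
  assume "\<not> \<bar>x\<bar> \<le> pi / 2"
  then have "cos \<bar>x\<bar> < 0" using assms(1) by (intro cos_lt_zero_pi) auto
  then show False using assms(2) by (simp add: abs_if split: if_splits)
qed

lemma Lambda1_eq: "Lambda1 = {z \<in> sphere 0 1. Re z \<ge> 0}"
proof
  show "Lambda1 \<subseteq> {z \<in> sphere 0 1. Re z \<ge> 0}"
  proof
    fix z assume "z \<in> Lambda1"
    then obtain t where t: "\<bar>t\<bar> \<le> 1/4" "z = cis (2 * pi * t)"
      unfolding Lambda1_def by force
    have "\<bar>2 * pi * t\<bar> \<le> pi / 2" using t(1) by (simp add: abs_mult)
    then have "cos (2 * pi * t) \<ge> 0" by (intro cos_ge_zero) linarith+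
    then show "z \<in> {z \<in> sphere 0 1. Re z \<ge> 0}" using t(2) by simp
  qed
  show "{z \<in> sphere 0 1. Re z \<ge> 0} \<subseteq> Lambda1"
  proof
    fix z :: complex assume z: "z \<in> {z \<in> sphere 0 1. Re z \<ge> 0}"
    then have z_eq: "z = cis (Arg z)" by (simp add: cis_Arg_unit)
    have "cos (Arg z) \<ge> 0" using z z_eq by (metis cis.sel(1) mem_Collect_eq)
    then have "\<bar>Arg z\<bar> \<le> pi / 2"
      using Arg_bounded[of z] by (intro abs_le_pi_half_if_cos_nonneg) auto
    then have "Arg z / (2 * pi) \<in> {-1/4..1/4}" by (auto simp: field_simps)
    moreover have "z = cis (2 * pi * (Arg z / (2 * pi)))" using z_eq by simp
    ultimately show "z \<in> Lambda1" unfolding Lambda1_def by blast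
  qed
qed

lemma closed_Lambda1: "closed Lambda1"
proof -
  have "Lambda1 = sphere 0 1 \<inter> {z. Re z \<ge> 0}" by (auto simp: Lambda1_eq)
  then show ?thesis by (metis closed_Int closed_sphere closed_halfspace_Re_ge)
qed

lemma Lambda1_if_norm_minus_one_le:
  fixes z :: complex
  assumes "cmod z = 1" "cmod (z - 1) \<le> 1"
  shows "z \<in> Lambda1"
proof -
  have "\<bar>Re (z - 1)\<bar> \<le> 1" using abs_Re_le_cmod assms(2) by (rule order_trans)
  then show ?thesis using assms(1) by (simp add: Lambda1_eq)
qed

lemma norm_cis_minus_one_le: "cmod (cis t - 1) \<le> 2 * \<bar>t\<bar>"
proof -
  have "\<bar>cos t - 1\<bar> = 2 * (sin (t / 2))\<^sup>2"
    using cos_double_sin[of "t / 2"] by simp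
  also have "\<dots> \<le> 2 * \<bar>sin (t / 2)\<bar>"
    using abs_sin_le_one[of "t / 2"] mult_left_le[of "\<bar>sin (t / 2)\<bar>" "\<bar>sin (t / 2)\<bar>"]
    by (simp add: power2_eq_square abs_mult)
  also have "\<dots> \<le> \<bar>t\<bar>" using abs_sin_x_le_abs_x[of "t / 2"] by simp
  finally have "\<bar>cos t - 1\<bar> \<le> \<bar>t\<bar>" .
  moreover have "cmod (cis t - 1) \<le> \<bar>cos t - 1\<bar> + \<bar>sin t\<bar>" using cmod_le[of "cis t - 1"] by simp
  ultimately show ?thesis using abs_sin_x_le_abs_x[of t] by linarith
qed

text \<open>Writing \<open>z = cis \<theta>\<close> with \<open>|\<theta>| \<le> \<pi>\<close>: each step from \<open>j\<theta>\<close> to \<open>(j+1)\<theta>\<close> moves by at most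
  \<open>\<pi>/2\<close>, so \<open>cos (j\<theta>) \<ge> 0\<close> keeps \<open>|j\<theta>| \<le> \<pi>/2\<close> all the way up to \<open>j = n\<close>.\<close>
lemma norm_minus_one_le_if_powers_in_Lambda1:
  fixes z :: complex and n :: nat
  assumes z: "cmod z = 1" and n: "n \<ge> 1" and powers: "\<forall>j\<in>{1..n}. z ^ j \<in> Lambda1"
  shows "cmod (z - 1) \<le> pi / n"
proof -
  define \<theta> where "\<theta> = Arg z"
  have z_eq: "z = cis \<theta>" using z by (simp add: cis_Arg_unit \<theta>_def)
  have cos_nonneg: "cos (real j * \<theta>) \<ge> 0" if "j \<in> {1..n}" for j
    using powers that by (auto simp: Lambda1_eq z_eq cos_n_Re_cis_pow_n)
  have \<theta>_le: "\<bar>\<theta>\<bar> \<le> pi / 2"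
    using Arg_bounded[of z] cos_nonneg[of 1] n
    by (intro abs_le_pi_half_if_cos_nonneg) (auto simp: \<theta>_def)
  have "j \<le> n \<longrightarrow> \<bar>real j * \<theta>\<bar> \<le> pi / 2" if "1 \<le> j" for j
    using that
  proof (induction j rule: dec_induct)
    case base
    then show ?case using \<theta>_le by simp
  next
    case (step j)
    have "\<bar>real (Suc j) * \<theta>\<bar> \<le> \<bar>real j * \<theta>\<bar> + \<bar>\<theta>\<bar>"
      using abs_triangle_ineq[of "real j * \<theta>" \<theta>] by (simp add: algebra_simps)
    then show ?case
      using step \<theta>_le cos_nonneg[of "Suc j"] by (intro impI abs_le_pi_half_if_cos_nonneg) auto
  qed
  then have "real n * \<bar>\<theta>\<bar> \<le> pi / 2" using n by (simp add: abs_mult)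
  then have "2 * \<bar>\<theta>\<bar> \<le> pi / n" using n by (simp add: field_simps)
  then show ?thesis using norm_cis_minus_one_le[of \<theta>] z_eq by simp
qed

lemma norm_diff_eq_norm_divide_minus_one:
  fixes a b :: complex
  assumes "cmod b = 1"
  shows "cmod (a - b) = cmod (a / b - 1)"
proof -
  have "a - b = b * (a / b - 1)" using assms by (auto simp: field_simps)
  then show ?thesis using assms by (simp add: norm_mult)
qed

lemma norm_mult_diff_le:
  fixes a b c d :: complex
  assumes "cmod a = 1" "cmod c = 1"
  shows "cmod (a * b - c * d) \<le> cmod (b - 1) + cmod (a - c) + cmod (d - 1)"
proof -
  have "a * b - c * d = a * (b - 1) + (a - c) + c * (1 - d)" by (simp add: algebra_simps)
  then have "cmod (a * b - c * d) \<le> cmod (a * (b - 1)) + cmod (a - c) + cmod (c * (1 - d))"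
    by (metis add_right_mono norm_triangle_ineq order_trans)
  also have "\<dots> = cmod (b - 1) + cmod (a - c) + cmod (d - 1)"
    using assms by (simp add: norm_mult norm_minus_commute)
  finally show ?thesis .
qed

lemma exists_nat_pi_divide_le:
  assumes "e > 0"
  shows "\<exists>n. n \<ge> 1 \<and> pi / real n \<le> e"
proof -
  obtain n :: nat where n: "pi / e < n" using reals_Archimedean2 by blast
  have "0 < pi / e" using assms by simp
  then have "n \<ge> 1" using n by simp
  moreover have "pi / n \<le> e" using n assms \<open>n \<ge> 1\<close> by (simp add: field_simps)
  ultimately show ?thesis by blast
qed

section \<open>Characters and polars\<close>

primrec nat_mult :: "nat \<Rightarrow> 'a::ab_group_add \<Rightarrow> 'a" where
  "nat_mult 0 v = 0"
| "nat_mult (Suc j) v = v + nat_mult j v"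

lemma nat_mult_zero_right [simp]: "nat_mult j 0 = 0"
  by (induction j) auto

lemma continuous_on_nat_mult:
  "continuous_on UNIV (nat_mult j :: 'a::topological_ab_group_add \<Rightarrow> 'a)"
  by (induction j) (auto intro!: continuous_intros)

definition multiples :: "nat \<Rightarrow> 'a::ab_group_add set \<Rightarrow> 'a set" where
  "multiples n K = (\<Union>j\<in>{1..n}. nat_mult j ` K)"

lemma compact_multiples:
  fixes K :: "'a::topological_ab_group_add set"
  assumes "compact K"
  shows "compact (multiples n K)"
  unfolding multiples_def
  using assms continuous_on_nat_mult
  by (intro compact_UN finite_atLeastAtMost ballI compact_continuous_image)
     (auto intro: continuous_on_subset)

lemma
  assumes "ch \<in> dual"
  shows dual_norm: "cmod (ch x) = 1"
    and dual_add: "ch (x + y) = ch x * ch y"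
    and continuous_on_dual: "continuous_on UNIV ch"
  using assms unfolding dual_def circle_eq_sphere by auto

lemma dual_nonzero: "ch \<in> dual \<Longrightarrow> ch x \<noteq> 0"
  using dual_norm[of ch x] by auto

lemma dual_zero:
  assumes "ch \<in> dual"
  shows "ch 0 = 1"
proof -
  have "ch 0 = ch 0 * ch 0" using dual_add[OF assms, of 0 0] by simp
  then show ?thesis using dual_nonzero[OF assms, of 0] by simp
qed

lemma dual_diff:
  assumes "ch \<in> dual"
  shows "ch (x - y) = ch x / ch y"
  using dual_add[OF assms, of "x - y" y] dual_nonzero[OF assms, of y] by (simp add: field_simps)

lemma dual_nat_mult:
  assumes "ch \<in> dual"
  shows "ch (nat_mult j v) = ch v ^ j"
  by (induction j) (simp_all add: dual_zero[OF assms] dual_add[OF assms])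

lemma divide_mem_dual:
  assumes "ch \<in> dual" "ch' \<in> dual"
  shows "(\<lambda>x. ch x / ch' x) \<in> dual"
  unfolding dual_def circle_eq_sphere
  using dual_norm[OF assms(1)] dual_norm[OF assms(2)] dual_add[OF assms(1)] dual_add[OF assms(2)]
    continuous_on_dual[OF assms(1)] continuous_on_dual[OF assms(2)] dual_nonzero[OF assms(2)]
  by (auto intro!: continuous_on_divide simp: norm_divide)

lemma power_mem_dual:
  assumes "ch \<in> dual"
  shows "(\<lambda>x. ch x ^ j) \<in> dual"
  unfolding dual_def circle_eq_sphere
  using dual_norm[OF assms] dual_add[OF assms] continuous_on_dual[OF assms]
  by (auto intro!: continuous_on_power simp: norm_power power_mult_distrib)

lemma polar_subset_dual: "polar S \<subseteq> dual"
  unfolding polar_def by auto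

lemma polar_antimono: "S \<subseteq> T \<Longrightarrow> polar T \<subseteq> polar S"
  unfolding polar_def by auto

lemma prepolar_antimono: "\<Phi> \<subseteq> \<Psi> \<Longrightarrow> prepolar \<Psi> \<subseteq> prepolar \<Phi>"
  unfolding prepolar_def by auto

lemma closed_prepolar:
  assumes "\<Phi> \<subseteq> dual"
  shows "closed (prepolar \<Phi>)"
proof -
  have "prepolar \<Phi> = (\<Inter>ch\<in>\<Phi>. ch -` Lambda1)" unfolding prepolar_def by auto
  moreover have "closed (ch -` Lambda1)" if "ch \<in> \<Phi>" for ch
    using that assms closed_Lambda1 continuous_on_dual by (intro closed_vimage) auto
  ultimately show ?thesis by auto
qed

lemma locally_quasi_convex_open_base:
  assumes "locally_quasi_convex TYPE('a::topological_ab_group_add)" and "nhd0 (W::'a set)"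
  obtains V where "open V" "0 \<in> V" "prepolar (polar V) \<subseteq> W"
proof -
  obtain U where U: "nhd0 U" "prepolar (polar U) \<subseteq> W"
    using assms unfolding locally_quasi_convex_def by blast
  obtain V where V: "open V" "0 \<in> V" "V \<subseteq> U" using U(1) unfolding nhd0_def by blast
  have "prepolar (polar V) \<subseteq> prepolar (polar U)"
    by (intro prepolar_antimono polar_antimono V(3))
  then show ?thesis using that V U(2) by blast
qed

section \<open>Equicontinuity and precompactness\<close>

text \<open>The quotient \<open>ch / ch'\<close> is a character whose powers up to \<open>n\<close> lie in the polar of \<open>K\<close>.\<close>
lemma norm_diff_le_on_prepolar_polar:
  fixes n :: nat
  assumes x: "x \<in> prepolar (polar K)" and ch: "ch \<in> dual" and ch': "ch' \<in> dual"
    and n: "n \<ge> 1" and close: "\<forall>l\<in>multiples n K. cmod (ch l - ch' l) \<le> 1"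
  shows "cmod (ch x - ch' x) \<le> pi / n"
proof -
  define \<eta> where "\<eta> = (\<lambda>x. ch x / ch' x)"
  have \<eta>: "\<eta> \<in> dual" unfolding \<eta>_def using ch ch' by (rule divide_mem_dual)
  have dist_\<eta>: "cmod (ch y - ch' y) = cmod (\<eta> y - 1)" for y
    unfolding \<eta>_def using dual_norm[OF ch'] by (rule norm_diff_eq_norm_divide_minus_one)
  have "\<eta> x ^ j \<in> Lambda1" if j: "j \<in> {1..n}" for j
  proof -
    have "\<eta> (nat_mult j k) \<in> Lambda1" if "k \<in> K" for k
    proof (rule Lambda1_if_norm_minus_one_le)
      show "cmod (\<eta> (nat_mult j k)) = 1" using \<eta> by (rule dual_norm)
      have "nat_mult j k \<in> multiples n K" using j that unfolding multiples_def by blast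
      then show "cmod (\<eta> (nat_mult j k) - 1) \<le> 1" using close dist_\<eta> by metis
    qed
    then have "(\<lambda>y. \<eta> y ^ j) \<in> polar K"
      unfolding polar_def using power_mem_dual[OF \<eta>] dual_nat_mult[OF \<eta>] by auto
    then show ?thesis using x unfolding prepolar_def by auto
  qed
  then have "cmod (\<eta> x - 1) \<le> pi / n"
    using dual_norm[OF \<eta>] n by (intro norm_minus_one_le_if_powers_in_Lambda1) auto
  then show ?thesis using dist_\<eta> by simp
qed

lemma polar_equicontinuous_at_0:
  fixes V :: "'a::topological_ab_group_add set" and n :: nat
  assumes "open V" "0 \<in> V" "n \<ge> 1"
  obtains V' where "open V'" "0 \<in> V'" "\<forall>ch\<in>polar V. \<forall>v\<in>V'. cmod (ch v - 1) \<le> pi / n"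
proof
  define V' where "V' = (\<Inter>j\<in>{1..n}. nat_mult j -` V)"
  show "open V'" unfolding V'_def
    using assms(1) continuous_on_nat_mult by (intro open_INT finite_atLeastAtMost ballI open_vimage)
  show "0 \<in> V'" unfolding V'_def using assms(2) by auto
  show "\<forall>ch\<in>polar V. \<forall>v\<in>V'. cmod (ch v - 1) \<le> pi / n"
  proof (intro ballI)
    fix ch v assume ch: "ch \<in> polar V" and v: "v \<in> V'"
    have "ch \<in> dual" using ch polar_subset_dual by auto
    moreover have "ch v ^ j \<in> Lambda1" if "j \<in> {1..n}" for j
    proof -
      have "ch (nat_mult j v) \<in> Lambda1" using that v ch unfolding V'_def polar_def by auto
      then show ?thesis using dual_nat_mult[OF \<open>ch \<in> dual\<close>] by simp
    qed
    ultimately show "cmod (ch v - 1) \<le> pi / n"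
      using assms(3) by (intro norm_minus_one_le_if_powers_in_Lambda1 dual_norm) auto
  qed
qed

lemma finite_net_on_finite_set:
  fixes \<Phi> :: "('a \<Rightarrow> 'b::metric_space) set"
  assumes P: "finite P" and C: "compact C" "\<forall>f\<in>\<Phi>. f ` P \<subseteq> C" and e: "e > 0"
  obtains X where "finite X" "X \<subseteq> \<Phi>" "\<forall>f\<in>\<Phi>. \<exists>g\<in>X. \<forall>p\<in>P. dist (f p) (g p) < e"
proof -
  obtain S where S: "finite S" "C \<subseteq> (\<Union>s\<in>S. ball s (e/2))"
    using seq_compact_imp_totally_bounded[OF compact_imp_seq_compact[OF C(1)]] e
    by (meson half_gt_zero)
  define T where "T g = {f \<in> \<Phi>. \<forall>p\<in>P. f p \<in> ball (g p) (e/2)}" for g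
  define X where "X = (\<lambda>g. SOME f. f \<in> T g) ` {g \<in> PiE P (\<lambda>_. S). T g \<noteq> {}}"
  have X_T: "\<exists>g. T g \<noteq> {} \<and> f' \<in> T g" if "f' \<in> X" for f'
    using that someI_ex[of "\<lambda>f. f \<in> T _"] unfolding X_def by blast
  show thesis
  proof
    have "finite (PiE P (\<lambda>_. S))" using P S(1) by (intro finite_PiE)
    then show "finite X" unfolding X_def by simp
    show "X \<subseteq> \<Phi>" using X_T unfolding T_def by blast
    show "\<forall>f\<in>\<Phi>. \<exists>g\<in>X. \<forall>p\<in>P. dist (f p) (g p) < e"
    proof
      fix f assume f: "f \<in> \<Phi>"
      define g where "g = (\<lambda>p\<in>P. SOME s. s \<in> S \<and> f p \<in> ball s (e/2))"
      have g: "g p \<in> S \<and> f p \<in> ball (g p) (e/2)" if "p \<in> P" for p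
      proof -
        have "\<exists>s. s \<in> S \<and> f p \<in> ball s (e/2)" using that f C(2) S(2) by blast
        from someI_ex[OF this] show ?thesis unfolding g_def using that by simp
      qed
      have "f \<in> T g" unfolding T_def using f g by auto
      define f' where "f' = (SOME f. f \<in> T g)"
      have f': "f' \<in> T g" unfolding f'_def using \<open>f \<in> T g\<close> by (rule someI[of "\<lambda>f. f \<in> T g"])
      show "\<exists>f'\<in>X. \<forall>p\<in>P. dist (f p) (f' p) < e"
      proof (intro bexI ballI)
        show "f' \<in> X" unfolding X_def f'_def using g \<open>f \<in> T g\<close> by (auto simp: g_def)
        fix p assume "p \<in> P"
        then have "dist (g p) (f p) < e/2" "dist (g p) (f' p) < e/2"
          using g f' unfolding T_def by auto
        then show "dist (f p) (f' p) < e"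
          using dist_triangle3[of "f p" "f' p" "g p"] by linarith
      qed
    qed
  qed
qed

lemma polar_finite_net:
  fixes V L :: "'a::topological_ab_group_add set"
  assumes V: "open V" "0 \<in> V" and L: "compact L" and e: "e > 0"
  obtains X where "finite X" "X \<subseteq> polar V"
    "\<forall>ch\<in>polar V. \<exists>ch'\<in>X. \<forall>l\<in>L. cmod (ch l - ch' l) \<le> e"
proof -
  obtain n :: nat where n: "n \<ge> 1" "pi / n \<le> e/4" using exists_nat_pi_divide_le[of "e/4"] e by auto
  obtain V' where V': "open V'" "0 \<in> V'" "\<forall>ch\<in>polar V. \<forall>v\<in>V'. cmod (ch v - 1) \<le> e/4"
    using polar_equicontinuous_at_0[OF V n(1)] n(2) by (metis order_trans)
  obtain P where P: "P \<subseteq> L" "finite P" "L \<subseteq> (\<Union>p\<in>P. (\<lambda>x. x - p) -` V')"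
  proof (rule compactE_image[OF L])
    show "open ((\<lambda>x. x - p) -` V')" for p
      using V'(1) by (intro open_vimage) (auto intro!: continuous_intros)
    show "L \<subseteq> (\<Union>p\<in>L. (\<lambda>x. x - p) -` V')" using V'(2) by force
  qed auto
  have "\<forall>ch\<in>polar V. ch ` P \<subseteq> sphere 0 1"
    using polar_subset_dual dual_norm by fastforce
  then obtain X where X: "finite X" "X \<subseteq> polar V"
    "\<forall>ch\<in>polar V. \<exists>ch'\<in>X. \<forall>p\<in>P. dist (ch p) (ch' p) < e/2"
    using finite_net_on_finite_set[OF P(2) compact_sphere] e by (metis half_gt_zero)
  show thesis
  proof (rule that[OF X(1,2)], intro ballI)
    fix ch assume ch: "ch \<in> polar V"
    then obtain ch' where ch': "ch' \<in> X" "\<forall>p\<in>P. dist (ch p) (ch' p) < e/2" using X(3) by blast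
    have dual: "ch \<in> dual" "ch' \<in> dual" using ch ch' X(2) polar_subset_dual by auto
    show "\<exists>ch'\<in>X. \<forall>l\<in>L. cmod (ch l - ch' l) \<le> e"
    proof (intro bexI ballI)
      fix l assume "l \<in> L"
      then obtain p where p: "p \<in> P" "l - p \<in> V'" using P(3) by auto
      have "cmod (ch l - ch' l) = cmod (ch p * ch (l - p) - ch' p * ch' (l - p))"
        using dual_add[OF dual(1), of p "l - p"] dual_add[OF dual(2), of p "l - p"] by simp
      also have "\<dots> \<le> cmod (ch (l - p) - 1) + cmod (ch p - ch' p) + cmod (ch' (l - p) - 1)"
        using dual_norm dual by (intro norm_mult_diff_le) auto
      also have "\<dots> \<le> e/4 + e/2 + e/4"
        using V'(3) ch ch'(1) X(2) p ch'(2) by (intro add_mono) (auto simp: dist_norm less_imp_le)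
      finally show "cmod (ch l - ch' l) \<le> e" by simp
    qed (use ch' in simp)
  qed
qed

lemma polar_finite_net_on_prepolar_polar:
  fixes K V :: "'a::topological_ab_group_add set"
  assumes K: "compact K" and V: "open V" "0 \<in> V"
  obtains X where "finite X" "X \<subseteq> polar V"
    "\<forall>ch\<in>polar V. \<exists>ch'\<in>X. \<forall>x\<in>prepolar (polar K). cmod (ch x - ch' x) \<le> 1/4"
proof -
  obtain X where X: "finite X" "X \<subseteq> polar V"
    "\<forall>ch\<in>polar V. \<exists>ch'\<in>X. \<forall>l\<in>multiples 16 K. cmod (ch l - ch' l) \<le> 1"
    using polar_finite_net[OF V compact_multiples[OF K], where e=1] by auto
  have "\<exists>ch'\<in>X. \<forall>x\<in>prepolar (polar K). cmod (ch x - ch' x) \<le> 1/4" if ch: "ch \<in> polar V" for ch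
  proof -
    obtain ch' where ch': "ch' \<in> X" "\<forall>l\<in>multiples 16 K. cmod (ch l - ch' l) \<le> 1"
      using X(3) ch by blast
    have "cmod (ch x - ch' x) \<le> pi / 16" if "x \<in> prepolar (polar K)" for x
      using norm_diff_le_on_prepolar_polar[OF that _ _ _ ch'(2)] ch ch'(1) X(2) polar_subset_dual
      by auto
    then show ?thesis using ch'(1) pi_less_4 by force
  qed
  then show thesis using that X(1,2) by blast
qed

text \<open>Precompactness of the quasi-convex hull of a compact set.\<close>
lemma prepolar_polar_finite_uniform_net:
  fixes K V :: "'a::topological_ab_group_add set"
  assumes K: "compact K" and V: "open V" "0 \<in> V"
  obtains X where "finite X" "X \<subseteq> dual"
    "\<forall>x\<in>prepolar (polar K). \<forall>y\<in>prepolar (polar K).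
        (\<forall>ch\<in>X. cmod (ch x - ch y) \<le> 1/4) \<longrightarrow> x - y \<in> prepolar (polar V)"
proof -
  obtain X where X: "finite X" "X \<subseteq> polar V"
    "\<forall>ch\<in>polar V. \<exists>ch'\<in>X. \<forall>x\<in>prepolar (polar K). cmod (ch x - ch' x) \<le> 1/4"
    using polar_finite_net_on_prepolar_polar[OF K V] by blast
  show thesis
  proof (rule that[OF X(1)], use X(2) polar_subset_dual in blast, intro ballI impI)
    fix x y assume x: "x \<in> prepolar (polar K)" and y: "y \<in> prepolar (polar K)"
      and close: "\<forall>ch\<in>X. cmod (ch x - ch y) \<le> 1/4"
    show "x - y \<in> prepolar (polar V)" unfolding prepolar_def
    proof (intro CollectI ballI)
      fix ch assume ch: "ch \<in> polar V"
      have dual: "ch \<in> dual" using ch polar_subset_dual by auto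
      obtain ch' where ch': "ch' \<in> X" "\<forall>x\<in>prepolar (polar K). cmod (ch x - ch' x) \<le> 1/4"
        using X(3) ch by blast
      have "cmod (ch (x - y) - 1) = cmod (ch x - ch y)"
        using dual_diff[OF dual] norm_diff_eq_norm_divide_minus_one[OF dual_norm[OF dual]] by simp
      also have "\<dots> \<le> cmod (ch x - ch' x) + cmod (ch' x - ch' y) + cmod (ch' y - ch y)"
        using dist_triangle[of "ch x" "ch y" "ch' x"] dist_triangle[of "ch' x" "ch y" "ch' y"]
        by (simp add: dist_norm)
      also have "\<dots> \<le> 1/4 + 1/4 + 1/4"
        using ch' x y close by (intro add_mono) (auto simp: norm_minus_commute)
      finally show "ch (x - y) \<in> Lambda1"
        using dual_norm[OF dual] by (intro Lambda1_if_norm_minus_one_le) auto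
    qed
  qed
qed

section \<open>Ultrafilters\<close>

definition is_ultrafilter :: "'a filter \<Rightarrow> bool" where
  "is_ultrafilter M \<longleftrightarrow> M \<noteq> bot \<and> (\<forall>P. eventually P M \<or> eventually (\<lambda>x. \<not> P x) M)"

lemma Inf_chain_not_bot:
  fixes C :: "'a filter set"
  assumes "C \<noteq> {}" "bot \<notin> C" and chain: "\<And>G H. G \<in> C \<Longrightarrow> H \<in> C \<Longrightarrow> G \<le> H \<or> H \<le> G"
  shows "Inf C \<noteq> bot"
proof
  have directed: "\<exists>x\<in>C. x \<le> inf G H" if "G \<in> C" "H \<in> C" for G H
    using chain[OF that] that by (metis inf.absorb1 inf.absorb2 order_refl)
  assume "Inf C = bot"
  then obtain G where "G \<in> C" "eventually (\<lambda>x. False) G"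
    using eventually_Inf_base[OF assms(1) directed, of "\<lambda>x. False"] by auto
  then show False using assms(2) by (simp add: eventually_False)
qed

lemma is_ultrafilter_if_maximal:
  assumes "M \<noteq> bot" and maximal: "\<And>G. G \<noteq> bot \<Longrightarrow> G \<le> M \<Longrightarrow> G = M"
  shows "is_ultrafilter M"
  unfolding is_ultrafilter_def
proof (intro conjI allI disjCI)
  fix P assume not_P: "\<not> eventually (\<lambda>x. \<not> P x) M"
  define G where "G = inf M (principal {x. P x})"
  have "G \<noteq> bot"
  proof
    assume "G = bot"
    then have "eventually (\<lambda>x. False) G" by simp
    then have "eventually (\<lambda>x. \<not> P x) M" unfolding G_def eventually_inf_principal by simp
    then show False using not_P by simp
  qed
  then have "G = M" using maximal unfolding G_def by simp
  moreover have "eventually P G" unfolding G_def eventually_inf_principal by simp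
  ultimately show "eventually P M" by simp
qed (use assms in simp)

lemma exists_ultrafilter_le:
  assumes "F \<noteq> bot"
  obtains M where "is_ultrafilter M" "M \<le> F"
proof -
  define A where "A = {G. G \<le> F \<and> G \<noteq> bot}"
  have "partial_order_on A (relation_of (\<lambda>G H. H \<le> G) A)"
    by (rule partial_order_on_relation_ofI) auto
  then obtain M where M: "M \<in> A" "\<And>G. G \<in> A \<Longrightarrow> G \<le> M \<Longrightarrow> G = M"
  proof (rule predicate_Zorn[THEN bexE])
    fix C assume C: "C \<in> Chains (relation_of (\<lambda>G H. H \<le> G) A)"
    then have CA: "C \<subseteq> A" by (rule Chains_relation_of)
    show "\<exists>U\<in>A. \<forall>G\<in>C. U \<le> G"
    proof (cases "C = {}")
      case True
      then show ?thesis using assms by (auto simp: A_def)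
    next
      case False
      have "Inf C \<noteq> bot"
        using False CA C by (intro Inf_chain_not_bot) (auto simp: A_def Chains_def relation_of_def)
      moreover have "Inf C \<le> F" using False CA by (auto simp: A_def intro: Inf_lower2)
      ultimately show ?thesis by (auto simp: A_def intro: Inf_lower)
    qed
  qed auto
  then have "is_ultrafilter M"
    by (intro is_ultrafilter_if_maximal) (auto simp: A_def intro: order_trans)
  then show thesis using M(1) that unfolding A_def by blast
qed

lemma is_ultrafilter_filtermap: "is_ultrafilter M \<Longrightarrow> is_ultrafilter (filtermap f M)"
  by (simp add: is_ultrafilter_def eventually_filtermap filtermap_bot_iff)

lemma ultrafilter_le_nhds:
  assumes M: "is_ultrafilter M" and cluster: "inf (nhds c) M \<noteq> bot"
  shows "M \<le> nhds c"
  unfolding le_nhds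
proof (intro allI impI)
  fix S assume S: "open S \<and> c \<in> S"
  show "eventually (\<lambda>x. x \<in> S) M"
  proof (rule ccontr)
    assume "\<not> eventually (\<lambda>x. x \<in> S) M"
    then have "eventually (\<lambda>x. x \<notin> S) (inf (nhds c) M)"
      using M unfolding is_ultrafilter_def by (blast intro: filter_leD[OF inf_le2])
    moreover have "eventually (\<lambda>x. x \<in> S) (inf (nhds c) M)"
      using S by (intro filter_leD[OF inf_le1]) (simp add: eventually_nhds_in_open)
    ultimately have "eventually (\<lambda>x. False) (inf (nhds c) M)"
      by (rule eventually_elim2) simp
    then show False using cluster by (simp add: eventually_False)
  qed
qed

lemma compact_if_ultrafilters_converge:
  assumes "\<And>M. is_ultrafilter M \<Longrightarrow> eventually (\<lambda>x. x \<in> Q) M \<Longrightarrow> \<exists>a\<in>Q. M \<le> nhds a"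
  shows "compact Q"
  unfolding compact_filter
proof (intro allI impI)
  fix F assume F: "F \<noteq> bot" "eventually (\<lambda>x. x \<in> Q) F"
  obtain M where M: "is_ultrafilter M" "M \<le> F" using exists_ultrafilter_le[OF F(1)] .
  then obtain a where "a \<in> Q" "M \<le> nhds a" using assms filter_leD[OF M(2) F(2)] by blast
  then have "M \<le> inf (nhds a) F" using M(2) by simp
  then show "\<exists>a\<in>Q. inf (nhds a) F \<noteq> bot"
    using M(1) \<open>a \<in> Q\<close> unfolding is_ultrafilter_def by (metis bot_unique)
qed

lemma ultrafilter_tendsto_Lim:
  fixes f :: "'a \<Rightarrow> 'b::t2_space"
  assumes M: "is_ultrafilter M" and C: "compact C" "eventually (\<lambda>x. f x \<in> C) M"
  shows "Lim M f \<in> C" "(f \<longlongrightarrow> Lim M f) M"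
proof -
  have fM: "is_ultrafilter (filtermap f M)" using M by (rule is_ultrafilter_filtermap)
  then obtain c where c: "c \<in> C" "inf (nhds c) (filtermap f M) \<noteq> bot"
    using C unfolding compact_filter is_ultrafilter_def by (auto simp: eventually_filtermap)
  then have "(f \<longlongrightarrow> c) M" unfolding filterlim_def by (intro ultrafilter_le_nhds[OF fM])
  moreover have "M \<noteq> bot" using M by (simp add: is_ultrafilter_def)
  ultimately show "Lim M f \<in> C" "(f \<longlongrightarrow> Lim M f) M" using c(1) by (simp_all add: tendsto_Lim)
qed

section \<open>Character limits along an ultrafilter on \<open>K\<^sup>\<rhd>\<^sup>\<lhd>\<close>\<close>

lemma
  assumes "is_ultrafilter M" "ch \<in> dual"
  shows Lim_dual_norm: "cmod (Lim M ch) = 1"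
    and tendsto_Lim_dual: "(ch \<longlongrightarrow> Lim M ch) M"
proof -
  have "eventually (\<lambda>x. ch x \<in> sphere 0 1) M" using dual_norm[OF assms(2)] by simp
  from ultrafilter_tendsto_Lim[OF assms(1) compact_sphere this]
  show "cmod (Lim M ch) = 1" "(ch \<longlongrightarrow> Lim M ch) M" by simp_all
qed

lemma ultrafilter_eventually_near_Lim_dual:
  assumes M: "is_ultrafilter M" and X: "finite X" "X \<subseteq> dual" and e: "e > 0"
  shows "eventually (\<lambda>x. \<forall>ch\<in>X. cmod (ch x - Lim M ch) < e) M"
  using X(1)
proof (rule eventually_ball_finite, intro ballI)
  fix ch assume "ch \<in> X"
  then have "(ch \<longlongrightarrow> Lim M ch) M" using M X(2) by (blast intro: tendsto_Lim_dual)
  then show "eventually (\<lambda>x. cmod (ch x - Lim M ch) < e) M"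
    using e by (simp add: tendsto_iff dist_norm)
qed

lemma ultrafilter_on_prepolar_polar_group_cauchy:
  fixes K :: "'a::topological_ab_group_add set"
  assumes lqc: "locally_quasi_convex TYPE('a)" and K: "compact K"
    and M: "is_ultrafilter M" "eventually (\<lambda>x. x \<in> prepolar (polar K)) M"
  shows "group_cauchy M"
  unfolding group_cauchy_def
proof (intro allI impI)
  fix U :: "'a set" assume "nhd0 U"
  then obtain V where V: "open V" "0 \<in> V" "prepolar (polar V) \<subseteq> U"
    using locally_quasi_convex_open_base[OF lqc] by blast
  obtain X where X: "finite X" "X \<subseteq> dual"
    "\<forall>x\<in>prepolar (polar K). \<forall>y\<in>prepolar (polar K).
        (\<forall>ch\<in>X. cmod (ch x - ch y) \<le> 1/4) \<longrightarrow> x - y \<in> prepolar (polar V)"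
    using prepolar_polar_finite_uniform_net[OF K V(1,2)] by blast
  define Y where "Y = {x \<in> prepolar (polar K). \<forall>ch\<in>X. cmod (ch x - Lim M ch) < 1/8}"
  have "eventually (\<lambda>x. x \<in> Y) M"
    using eventually_conj[OF M(2) ultrafilter_eventually_near_Lim_dual[OF M(1) X(1,2), of "1/8"]]
    by (simp add: Y_def)
  moreover have "x - y \<in> U" if "x \<in> Y" "y \<in> Y" for x y
  proof -
    have "cmod (ch x - ch y) \<le> 1/4" if "ch \<in> X" for ch
    proof -
      have "cmod (ch x - Lim M ch) < 1/8" "cmod (ch y - Lim M ch) < 1/8"
        using \<open>x \<in> Y\<close> \<open>y \<in> Y\<close> that unfolding Y_def by blast+
      then show ?thesis using dist_triangle2[of "ch x" "ch y" "Lim M ch"] by (simp add: dist_norm)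
    qed
    then show ?thesis using X(3) V(3) that unfolding Y_def by blast
  qed
  ultimately show "\<exists>Y. eventually (\<lambda>x. x \<in> Y) M \<and> (\<forall>x\<in>Y. \<forall>y\<in>Y. x - y \<in> U)" by blast
qed

lemma norm_Lim_diff_le_on_prepolar_polar:
  fixes K :: "'a::topological_ab_group_add set" and n :: nat
  assumes M: "is_ultrafilter M" "eventually (\<lambda>x. x \<in> prepolar (polar K)) M"
    and ch: "ch \<in> dual" and ch': "ch' \<in> dual" and n: "n \<ge> 1"
    and close: "\<forall>l\<in>multiples n K. cmod (ch l - ch' l) \<le> 1"
  shows "cmod (Lim M ch - Lim M ch') \<le> pi / n"
proof -
  have lim: "((\<lambda>x. ch x - ch' x) \<longlongrightarrow> Lim M ch - Lim M ch') M"
    using tendsto_Lim_dual[OF M(1) ch] tendsto_Lim_dual[OF M(1) ch'] by (rule tendsto_diff)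
  have near: "eventually (\<lambda>x. ch x - ch' x \<in> cball 0 (pi / n)) M"
    using M(2)
  proof (rule eventually_mono)
    fix x assume "x \<in> prepolar (polar K)"
    then show "ch x - ch' x \<in> cball 0 (pi / n)"
      using norm_diff_le_on_prepolar_polar[OF _ ch ch' n close] by simp
  qed
  have "M \<noteq> bot" using M(1) by (simp add: is_ultrafilter_def)
  from Lim_in_closed_set[OF closed_cball near this lim] show ?thesis by simp
qed

lemma compact_open_dual_nhd_uniformly_near:
  fixes L :: "'a::topological_ab_group_add set"
  assumes L: "compact L" and ch0: "ch0 \<in> dual"
  obtains T where "openin compact_open_dual T" "ch0 \<in> T" "T \<subseteq> dual"
    "\<forall>ch\<in>T. \<forall>l\<in>L. cmod (ch l - ch0 l) < 1"
proof -
  obtain S :: "complex set" where S: "finite S" "sphere 0 1 \<subseteq> (\<Union>c\<in>S. ball c (1/4))"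
    using seq_compact_imp_totally_bounded[OF compact_imp_seq_compact[OF compact_sphere[of 0 1]], rule_format, of "1/4"]
    by auto
  have "S \<noteq> {}" using subsetD[OF S(2), of 1] by auto
  define G where "G c = {ch \<in> dual. ch ` (L \<inter> ch0 -` cball c (1/4)) \<subseteq> ball c (1/2)}" for c
  have "openin compact_open_dual (G c)" for c
  proof -
    have "compact (L \<inter> ch0 -` cball c (1/4))"
      using L continuous_on_dual[OF ch0] by (intro compact_Int_closed closed_vimage) auto
    then show ?thesis unfolding compact_open_dual_def G_def
      by (intro topology_generated_by_Basis) blast
  qed
  then have "openin compact_open_dual (\<Inter>(G ` S))"
    using S(1) \<open>S \<noteq> {}\<close> by (intro openin_Inter) auto
  moreover have "ch0 \<in> \<Inter>(G ` S)" unfolding G_def using ch0 by (auto simp: dist_commute)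
  moreover have "\<Inter>(G ` S) \<subseteq> dual" using \<open>S \<noteq> {}\<close> unfolding G_def by auto
  moreover have "\<forall>ch\<in>\<Inter>(G ` S). \<forall>l\<in>L. cmod (ch l - ch0 l) < 1"
  proof (intro ballI)
    fix ch l assume ch: "ch \<in> \<Inter>(G ` S)" and l: "l \<in> L"
    obtain c where c: "c \<in> S" "dist c (ch0 l) < 1/4"
      using subsetD[OF S(2), of "ch0 l"] dual_norm[OF ch0, of l] by auto
    have "ch \<in> G c" using ch c(1) by blast
    moreover have "l \<in> L \<inter> ch0 -` cball c (1/4)" using l c(2) by simp
    ultimately have "ch l \<in> ball c (1/2)" unfolding G_def by blast
    then have "dist c (ch l) < 1/2" by simp
    then show "cmod (ch l - ch0 l) < 1"
      using c(2) dist_triangle3[of "ch l" "ch0 l" c] unfolding dist_norm by linarith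
  qed
  ultimately show thesis by (rule that)
qed

lemma continuous_map_Lim_dual:
  fixes K :: "'a::topological_ab_group_add set"
  assumes K: "compact K" and M: "is_ultrafilter M" "eventually (\<lambda>x. x \<in> prepolar (polar K)) M"
  shows "continuous_map (subtopology compact_open_dual dual) euclidean (Lim M)"
  unfolding continuous_map_atin limitin_canonical_iff
proof
  let ?D = "subtopology compact_open_dual (dual :: ('a \<Rightarrow> complex) set)"
  fix ch0 assume "ch0 \<in> topspace ?D"
  then have ch0: "ch0 \<in> dual" by simp
  show "(Lim M \<longlongrightarrow> Lim M ch0) (atin ?D ch0)"
    unfolding tendsto_iff eventually_atin
  proof (intro allI impI disjI2)
    fix e :: real assume "e > 0"
    then obtain n :: nat where n: "n \<ge> 1" "pi / n \<le> e/2"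
      using exists_nat_pi_divide_le[of "e/2"] by auto
    obtain T where T: "openin compact_open_dual T" "ch0 \<in> T" "T \<subseteq> dual"
      "\<forall>ch\<in>T. \<forall>l\<in>multiples n K. cmod (ch l - ch0 l) < 1"
      using compact_open_dual_nhd_uniformly_near[OF compact_multiples[OF K] ch0] by blast
    show "\<exists>U. openin ?D U \<and> ch0 \<in> U \<and> (\<forall>ch\<in>U - {ch0}. dist (Lim M ch) (Lim M ch0) < e)"
    proof (intro exI conjI ballI)
      show "openin ?D T" using T(1,3) by (metis inf.absorb1 openin_subtopology_Int)
      show "ch0 \<in> T" by fact
      fix ch assume ch: "ch \<in> T - {ch0}"
      then have "\<forall>l\<in>multiples n K. cmod (ch l - ch0 l) \<le> 1" using T(4) by (auto intro: less_imp_le)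
      then have "cmod (Lim M ch - Lim M ch0) \<le> pi / n"
        using T(3) ch by (intro norm_Lim_diff_le_on_prepolar_polar[OF M _ ch0 n(1)]) auto
      then show "dist (Lim M ch) (Lim M ch0) < e" unfolding dist_norm using n(2) \<open>e > 0\<close> by linarith
    qed
  qed
qed

lemma Lim_mem_bidual:
  fixes K :: "'a::topological_ab_group_add set"
  assumes K: "compact K" and M: "is_ultrafilter M" "eventually (\<lambda>x. x \<in> prepolar (polar K)) M"
  shows "Lim M \<in> bidual"
proof -
  have "Lim M \<in> topspace (subtopology compact_open_dual dual) \<rightarrow> circle"
    using Lim_dual_norm[OF M(1)] by (auto simp: circle_eq_sphere)
  then have "continuous_map (subtopology compact_open_dual dual) (top_of_set circle) (Lim M)"
    using continuous_map_Lim_dual[OF K M] continuous_map_in_subtopology by blast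
  moreover have "Lim M (\<lambda>x. ch x * ch' x) = Lim M ch * Lim M ch'" if "ch \<in> dual" "ch' \<in> dual" for ch ch'
    using M(1) tendsto_Lim_dual[OF M(1) that(1)] tendsto_Lim_dual[OF M(1) that(2)]
    by (intro tendsto_Lim tendsto_mult) (auto simp: is_ultrafilter_def)
  ultimately show ?thesis unfolding bidual_def by blast
qed

lemma mem_prepolar_if_Lim_dual_eq:
  assumes M: "is_ultrafilter M" "eventually (\<lambda>x. x \<in> prepolar \<Phi>) M" and "\<Phi> \<subseteq> dual"
    and a: "\<forall>ch\<in>dual. Lim M ch = ch a"
  shows "a \<in> prepolar \<Phi>"
  unfolding prepolar_def
proof (intro CollectI ballI)
  fix ch assume ch: "ch \<in> \<Phi>"
  then have "ch \<in> dual" using \<open>\<Phi> \<subseteq> dual\<close> by auto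
  have "eventually (\<lambda>x. ch x \<in> Lambda1) M"
    using M(2) by (rule eventually_mono) (use ch in \<open>auto simp: prepolar_def\<close>)
  moreover have "M \<noteq> bot" using M(1) by (simp add: is_ultrafilter_def)
  ultimately have "Lim M ch \<in> Lambda1"
    using Lim_in_closed_set[OF closed_Lambda1] tendsto_Lim_dual[OF M(1) \<open>ch \<in> dual\<close>] by blast
  then show "ch a \<in> Lambda1" using a \<open>ch \<in> dual\<close> by simp
qed

lemma ultrafilter_on_prepolar_polar_le_nhds:
  fixes K :: "'a::topological_ab_group_add set"
  assumes lqc: "locally_quasi_convex TYPE('a)" and K: "compact K"
    and M: "is_ultrafilter M" "eventually (\<lambda>x. x \<in> prepolar (polar K)) M"
    and a: "\<forall>ch\<in>dual. Lim M ch = ch a"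
  shows "M \<le> nhds a"
  unfolding le_nhds
proof (intro allI impI)
  have a_mem: "a \<in> prepolar (polar K)"
    using M polar_subset_dual a by (rule mem_prepolar_if_Lim_dual_eq)
  fix S assume S: "open S \<and> a \<in> S"
  define W where "W = (\<lambda>w. w + a) -` S"
  have "open W" unfolding W_def using S by (intro open_vimage continuous_intros) auto
  moreover have "0 \<in> W" using S by (simp add: W_def)
  ultimately have "nhd0 W" unfolding nhd0_def by blast
  then obtain V where V: "open V" "0 \<in> V" "prepolar (polar V) \<subseteq> W"
    using locally_quasi_convex_open_base[OF lqc] by blast
  obtain X where X: "finite X" "X \<subseteq> dual"
    "\<forall>x\<in>prepolar (polar K). \<forall>y\<in>prepolar (polar K).
        (\<forall>ch\<in>X. cmod (ch x - ch y) \<le> 1/4) \<longrightarrow> x - y \<in> prepolar (polar V)"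
    using prepolar_polar_finite_uniform_net[OF K V(1,2)] by blast
  have "eventually (\<lambda>x. x \<in> prepolar (polar K) \<and> (\<forall>ch\<in>X. cmod (ch x - Lim M ch) < 1/4)) M"
    using eventually_conj[OF M(2) ultrafilter_eventually_near_Lim_dual[OF M(1) X(1,2), of "1/4"]]
    by simp
  then show "eventually (\<lambda>x. x \<in> S) M"
  proof (rule eventually_mono)
    fix x assume x: "x \<in> prepolar (polar K) \<and> (\<forall>ch\<in>X. cmod (ch x - Lim M ch) < 1/4)"
    have "\<forall>ch\<in>X. cmod (ch x - ch a) \<le> 1/4"
    proof
      fix ch assume "ch \<in> X"
      then have "Lim M ch = ch a" using a X(2) by blast
      then show "cmod (ch x - ch a) \<le> 1/4" using x \<open>ch \<in> X\<close> by (metis less_imp_le)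
    qed
    then have "x - a \<in> W" using X(3) x a_mem V(3) by blast
    then show "x \<in> S" by (simp add: W_def)
  qed
qed

theorem mainTheorem8:
  assumes "locally_quasi_convex TYPE('a::{topological_ab_group_add, t2_space})"
    and "group_complete TYPE('a) \<or> alpha_surjective TYPE('a)"
  shows "qc_compactness TYPE('a)"
  unfolding qc_compactness_def
proof (intro allI impI)
  fix K :: "'a set" assume K: "compact K"
  show "compact (prepolar (polar K))"
  proof (rule compact_if_ultrafilters_converge)
    fix M assume M: "is_ultrafilter M" "eventually (\<lambda>x. x \<in> prepolar (polar K)) M"
    obtain a where a: "M \<le> nhds a"
      using assms(2)
    proof
      assume "group_complete TYPE('a)"
      then show thesis
        using that ultrafilter_on_prepolar_polar_group_cauchy[OF assms(1) K M] M(1)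
        unfolding group_complete_def is_ultrafilter_def by blast
    next
      assume "alpha_surjective TYPE('a)"
      then obtain a where "\<forall>ch\<in>dual. Lim M ch = ch a"
        using Lim_mem_bidual[OF K M] unfolding alpha_surjective_def by blast
      then show thesis using that ultrafilter_on_prepolar_polar_le_nhds[OF assms(1) K M] by blast
    qed
    then have "((\<lambda>x. x) \<longlongrightarrow> a) M" by (simp add: filterlim_def filtermap_ident)
    then have "a \<in> prepolar (polar K)"
      using Lim_in_closed_set[OF closed_prepolar[OF polar_subset_dual] M(2)] M(1)
      by (auto simp: is_ultrafilter_def)
    then show "\<exists>a\<in>prepolar (polar K). M \<le> nhds a" using a by blast
  qed
qed

end
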